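(* For an implication of canonical form $(\ast)$ and an environment $\eta$, the Parametricity Condition holds if and only if the implication is $n$-ary $\eta$-valid for every $n\ge1$.
   Context: $\mathsf{Heap}$: finite partial functions $\mathsf{PosInt}\to\mathsf{Int}$; $g\sqsubseteq h$ means $h$ extends $g$; $h\cdot g$ union of disjoint heaps; componentwise on $\mathsf{Heap}^n$. $\mathsf{IRel}_n$: upward closed subsets of $\mathsf{Heap}^n$; $p*q=\{\mathbf f\cdot\mathbf g\mid\mathbf f\in p,\mathbf g\in q,\text{componentwise disjoint}\}$; $\Delta_n(X)=\{(h_1,\dots,h_n)\mid\exists f\in X.\ \forall k.\ f\sqsubseteq h_k\}$. Assertions: built from primitive assertions $P$, assertion variables, $\mathsf{true},\mathsf{false},\wedge,\vee,*$, quantifiers over integer variables. $n$-ary meaning under $\eta$ and $\rho:\mathsf{AVar}\to\mathsf{IRel}_n$: $[\![P]\!]^n=\Delta_n([\![P]\!]^{\mathrm{prim}}_\eta)$, $[\![a]\!]^n=\rho(a)$, connectives by $\mathsf{Heap}^n,\emptyset,\cap,\cup,*$, quantifiers by unions/intersections. $n$-ary $\eta$-validity of $\varphi\Rightarrow\psi$: $[\![\varphi]\!]^n_{\eta,\rho}\subseteq[\![\psi]\!]^n_{\eta,\rho}$ for all $\rho:\mathsf{AVar}\to\mathsf{IRel}_n$. Canonical form $(\ast)$: $\bigwedge_{i=1}^M\varphi_i*a_{i,1}*\cdots*a_{i,M_i}\Rightarrow\bigvee_{j=1}^N\psi_j*b_{j,1}*\cdots*b_{j,N_j}$, $M\ge1$,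 $N\ge0$, $\varphi_i,\psi_j$ free of assertion variables, every $b_{j,k}$ among the $a_{i,k}$. $V=\{a_{i,k}\}$; $\Pi(i)(c)=|\{k\mid a_{i,k}=c\}|$, $\Omega(j)(c)=|\{k\mid b_{j,k}=c\}|$; $\Pi(i)\ge\Omega(j)$ iff $\Pi(i)(c)\ge\Omega(j)(c)$ for all $c\in V$. Disjunct $j$ is empty if $N_j=0$. Parametricity Condition: for all $h,h_1,\dots,h_M\in\mathsf{Heap}$ with $h_i\sqsubseteq h$ and $h_i\in[\![\varphi_i]\!]^1_\eta$ for all $i$, either (1) there are $i,j$ with $h_i\in[\![\psi_j]\!]^1_\eta$ and $\Pi(i)\ge\Omega(j)$, or (2) there is an empty disjunct $j$ with $h\in[\![\psi_j]\!]^1_\eta$. *)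

theory Defs
  imports Main
begin

type_synonym heap = "int \<rightharpoonup> int"

definition Heap :: "heap set" where
  "Heap = {h. finite (dom h) \<and> dom h \<subseteq> {x. x > 0}}"

definition HeapN :: "nat \<Rightarrow> heap list set" where
  "HeapN n = {hs. length hs = n \<and> (\<forall>h\<in>set hs. h \<in> Heap)}"

definition le_tuple :: "heap list \<Rightarrow> heap list \<Rightarrow> bool" where
  "le_tuple gs hs \<longleftrightarrow> length gs = length hs \<and> (\<forall>k<length hs. gs ! k \<subseteq>\<^sub>m hs ! k)"

definition IRel :: "nat \<Rightarrow> heap list set set" where
  "IRel n = {p. p \<subseteq> HeapN n \<and> (\<forall>gs\<in>p. \<forall>hs\<in>HeapN n. le_tuple gs hs \<longrightarrow> hs \<in> p)}"

definition disj_tuple :: "heap list \<Rightarrow> heap list \<Rightarrow> bool" where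
  "disj_tuple fs gs \<longleftrightarrow> length fs = length gs \<and>
     (\<forall>k<length fs. dom (fs ! k) \<inter> dom (gs ! k) = {})"

definition union_tuple :: "heap list \<Rightarrow> heap list \<Rightarrow> heap list" where
  "union_tuple fs gs = map2 (\<lambda>f g. f ++ g) fs gs"

definition sep_star :: "heap list set \<Rightarrow> heap list set \<Rightarrow> heap list set" where
  "sep_star p q = {union_tuple fs gs | fs gs. fs \<in> p \<and> gs \<in> q \<and> disj_tuple fs gs}"

definition Delta :: "nat \<Rightarrow> heap set \<Rightarrow> heap list set" where
  "Delta n X = {hs. length hs = n \<and> (\<forall>h\<in>set hs. h \<in> Heap) \<and>
                    (\<exists>f\<in>X. \<forall>k<n. f \<subseteq>\<^sub>m hs ! k)}"

text \<open>'p: primitive assertions, 'v: integer variables, 'a: assertion variables.\<close>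
datatype ('p, 'v, 'a) assn =
    Prim 'p
  | AVar 'a
  | ATrue
  | AFalse
  | Conj "('p, 'v, 'a) assn" "('p, 'v, 'a) assn"
  | Disj "('p, 'v, 'a) assn" "('p, 'v, 'a) assn"
  | Star "('p, 'v, 'a) assn" "('p, 'v, 'a) assn"
  | Ex 'v "('p, 'v, 'a) assn"
  | All 'v "('p, 'v, 'a) assn"

fun avars :: "('p, 'v, 'a) assn \<Rightarrow> 'a set" where
  "avars (Prim P) = {}"
| "avars (AVar a) = {a}"
| "avars ATrue = {}"
| "avars AFalse = {}"
| "avars (Conj p q) = avars p \<union> avars q"
| "avars (Disj p q) = avars p \<union> avars q"
| "avars (Star p q) = avars p \<union> avars q"
| "avars (Ex x p) = avars p"
| "avars (All x p) = avars p"

text \<open>n-ary meaning. prim is the primitive semantics: prim P eta is the set of heaps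
  denoted by the primitive assertion P under the integer environment eta.\<close>
fun sem :: "('p \<Rightarrow> ('v \<Rightarrow> int) \<Rightarrow> heap set) \<Rightarrow> nat \<Rightarrow> ('v \<Rightarrow> int) \<Rightarrow> ('a \<Rightarrow> heap list set)
             \<Rightarrow> ('p, 'v, 'a) assn \<Rightarrow> heap list set" where
  "sem prim n \<eta> \<rho> (Prim P) = Delta n (prim P \<eta>)"
| "sem prim n \<eta> \<rho> (AVar a) = \<rho> a"
| "sem prim n \<eta> \<rho> ATrue = HeapN n"
| "sem prim n \<eta> \<rho> AFalse = {}"
| "sem prim n \<eta> \<rho> (Conj p q) = sem prim n \<eta> \<rho> p \<inter> sem prim n \<eta> \<rho> q"
| "sem prim n \<eta> \<rho> (Disj p q) = sem prim n \<eta> \<rho> p \<union> sem prim n \<eta> \<rho> q"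
| "sem prim n \<eta> \<rho> (Star p q) = sep_star (sem prim n \<eta> \<rho> p) (sem prim n \<eta> \<rho> q)"
| "sem prim n \<eta> \<rho> (Ex x p) = (\<Union>v. sem prim n (\<eta>(x := v)) \<rho> p)"
| "sem prim n \<eta> \<rho> (All x p) = HeapN n \<inter> (\<Inter>v. sem prim n (\<eta>(x := v)) \<rho> p)"

definition valid_n :: "('p \<Rightarrow> ('v \<Rightarrow> int) \<Rightarrow> heap set) \<Rightarrow> nat \<Rightarrow> ('v \<Rightarrow> int)
    \<Rightarrow> ('p, 'v, 'a) assn \<Rightarrow> ('p, 'v, 'a) assn \<Rightarrow> bool" where
  "valid_n prim n \<eta> \<phi> \<psi> \<longleftrightarrow>
     (\<forall>\<rho>. (\<forall>a. \<rho> a \<in> IRel n) \<longrightarrow> sem prim n \<eta> \<rho> \<phi> \<subseteq> sem prim n \<eta> \<rho> \<psi>)"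

text \<open>A canonical implication is given by a list L of pairs (phi_i, [a_i1,...,a_iMi])
  (the conjuncts) and a list R of pairs (psi_j, [b_j1,...,b_jNj]) (the disjuncts).\<close>

definition star_vars :: "('p, 'v, 'a) assn \<Rightarrow> 'a list \<Rightarrow> ('p, 'v, 'a) assn" where
  "star_vars \<phi> as = foldl Star \<phi> (map AVar as)"

fun big_conj :: "('p, 'v, 'a) assn list \<Rightarrow> ('p, 'v, 'a) assn" where
  "big_conj [] = ATrue"
| "big_conj [p] = p"
| "big_conj (p # ps) = Conj p (big_conj ps)"

fun big_disj :: "('p, 'v, 'a) assn list \<Rightarrow> ('p, 'v, 'a) assn" where
  "big_disj [] = AFalse"
| "big_disj [p] = p"
| "big_disj (p # ps) = Disj p (big_disj ps)"

definition canon_lhs :: "(('p, 'v, 'a) assn \<times> 'a list) list \<Rightarrow> ('p, 'v, 'a) assn" where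
  "canon_lhs L = big_conj (map (\<lambda>(\<phi>, as). star_vars \<phi> as) L)"

definition canon_rhs :: "(('p, 'v, 'a) assn \<times> 'a list) list \<Rightarrow> ('p, 'v, 'a) assn" where
  "canon_rhs R = big_disj (map (\<lambda>(\<psi>, bs). star_vars \<psi> bs) R)"

definition canonical :: "(('p, 'v, 'a) assn \<times> 'a list) list \<Rightarrow> (('p, 'v, 'a) assn \<times> 'a list) list \<Rightarrow> bool" where
  "canonical L R \<longleftrightarrow> L \<noteq> [] \<and>
     (\<forall>(\<phi>, as)\<in>set L. avars \<phi> = {}) \<and>
     (\<forall>(\<psi>, bs)\<in>set R. avars \<psi> = {}) \<and>
     (\<forall>(\<psi>, bs)\<in>set R. set bs \<subseteq> (\<Union>(\<phi>, as)\<in>set L. set as))"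

definition Vset :: "(('p, 'v, 'a) assn \<times> 'a list) list \<Rightarrow> 'a set" where
  "Vset L = (\<Union>(\<phi>, as)\<in>set L. set as)"

definition Pi :: "(('p, 'v, 'a) assn \<times> 'a list) list \<Rightarrow> nat \<Rightarrow> 'a \<Rightarrow> nat" where
  "Pi L i c = length (filter (\<lambda>a. a = c) (snd (L ! i)))"

definition Omega :: "(('p, 'v, 'a) assn \<times> 'a list) list \<Rightarrow> nat \<Rightarrow> 'a \<Rightarrow> nat" where
  "Omega R j c = length (filter (\<lambda>b. b = c) (snd (R ! j)))"

definition Pi_ge_Omega :: "(('p, 'v, 'a) assn \<times> 'a list) list \<Rightarrow> (('p, 'v, 'a) assn \<times> 'a list) list
    \<Rightarrow> nat \<Rightarrow> nat \<Rightarrow> bool" where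
  "Pi_ge_Omega L R i j \<longleftrightarrow> (\<forall>c\<in>Vset L. Pi L i c \<ge> Omega R j c)"

text \<open>Unary meaning of an assertion free of assertion variables (rho is irrelevant).\<close>
definition sem1 :: "('p \<Rightarrow> ('v \<Rightarrow> int) \<Rightarrow> heap set) \<Rightarrow> ('v \<Rightarrow> int) \<Rightarrow> ('p, 'v, 'a) assn \<Rightarrow> heap set" where
  "sem1 prim \<eta> \<phi> = {h. [h] \<in> sem prim 1 \<eta> (\<lambda>_. {}) \<phi>}"

definition parametricity_condition :: "('p \<Rightarrow> ('v \<Rightarrow> int) \<Rightarrow> heap set) \<Rightarrow> ('v \<Rightarrow> int)
    \<Rightarrow> (('p, 'v, 'a) assn \<times> 'a list) list \<Rightarrow> (('p, 'v, 'a) assn \<times> 'a list) list \<Rightarrow> bool" where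
  "parametricity_condition prim \<eta> L R \<longleftrightarrow>
     (\<forall>h hs. h \<in> Heap \<longrightarrow> length hs = length L \<longrightarrow>
        (\<forall>i<length L. hs ! i \<in> Heap \<and> hs ! i \<subseteq>\<^sub>m h \<and> hs ! i \<in> sem1 prim \<eta> (fst (L ! i))) \<longrightarrow>
        (\<exists>i<length L. \<exists>j<length R. hs ! i \<in> sem1 prim \<eta> (fst (R ! j)) \<and> Pi_ge_Omega L R i j) \<or>
        (\<exists>j<length R. snd (R ! j) = [] \<and> h \<in> sem1 prim \<eta> (fst (R ! j))))"

end

theory Submission
  imports Defs "HOL-Library.Multiset" "HOL-Library.Countable"
begin

text \<open>An assertion without assertion variables denotes, at every arity \<open>n\<close>, the tuples lying
  above a common heap of its unary meaning, and \<open>\<phi> * a\<^sub>1 * \<dots> * a\<^sub>m\<close> denotes the tuples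
  whose locations can be coloured by the factors.

  Soundness: the pure witnesses of the conjuncts of the premise lie below the meet of the tuple.
  The parametricity condition applied to them either gives an empty disjunct holding at the meet,
  or conjunct \<open>i\<close> and disjunct \<open>j\<close> with \<open>\<Omega>(j) \<le> \<Pi>(i)\<close> whose pure part holds at the witness of
  \<open>i\<close>; then the colouring of conjunct \<open>i\<close> serves for disjunct \<open>j\<close> once the unmatched factors
  are merged into the pure part.

  Completeness: from heaps \<open>h\<^sub>i \<subseteq>\<^sub>m h\<close> one builds, for \<open>n\<close> large, \<open>n\<close> extensions of \<open>h\<close> by
  fresh token locations and relations for the assertion variables satisfying the premise. The
  tokens force every disjunct satisfied by this tuple to be matched inside a single conjunct, which
  yields alternative (1) of the condition, or alternative (2) for an empty disjunct.\<close>

lemma Heap_map_le: "g \<subseteq>\<^sub>m h \<Longrightarrow> h \<in> Heap \<Longrightarrow> g \<in> Heap"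
  unfolding Heap_def using map_le_implies_dom_le
  by (metis (no_types, lifting) finite_subset mem_Collect_eq order_trans)

lemma Heap_restrict_map: "h \<in> Heap \<Longrightarrow> h |` A \<in> Heap"
  by (rule Heap_map_le[of _ h]) (auto simp: map_le_def)

lemma Heap_map_add: "f \<in> Heap \<Longrightarrow> g \<in> Heap \<Longrightarrow> f ++ g \<in> Heap"
  unfolding Heap_def by auto

lemma HeapN_iff: "hs \<in> HeapN n \<longleftrightarrow> length hs = n \<and> (\<forall>c<n. hs ! c \<in> Heap)"
  unfolding HeapN_def by (auto simp: in_set_conv_nth) (metis nth_mem)

lemma restrict_map_le: "h |` A \<subseteq>\<^sub>m h"
  by (auto simp: map_le_def restrict_map_def)

lemma restrict_map_mono: "A \<subseteq> B \<Longrightarrow> h |` A \<subseteq>\<^sub>m h |` B"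
  by (auto simp: map_le_def restrict_map_def)

lemma map_add_restrict_compl: "(h |` A) ++ (h |` (- A)) = h"
  by (rule ext) (auto simp: map_add_def restrict_map_def split: option.splits)

lemma map_le_map_add_disjoint: "dom f \<inter> dom g = {} \<Longrightarrow> f \<subseteq>\<^sub>m f ++ g"
  by (metis map_add_comm map_le_map_add)

lemma map_le_map_add_mono:
  assumes "x \<subseteq>\<^sub>m f" "y \<subseteq>\<^sub>m g" "dom f \<inter> dom g = {}"
  shows "x ++ y \<subseteq>\<^sub>m f ++ g"
  using assms by (force simp: map_le_def map_add_def dom_def split: option.splits)

lemma map_le_split_restrict: "f \<subseteq>\<^sub>m h \<Longrightarrow> h = f ++ (h |` (- dom f))"
  by (rule ext) (auto simp: map_le_def map_add_def restrict_map_def dom_def split: option.splits)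

lemma le_tuple_refl: "le_tuple gs gs"
  by (simp add: le_tuple_def)

lemma le_tuple_trans: "le_tuple fs gs \<Longrightarrow> le_tuple gs hs \<Longrightarrow> le_tuple fs hs"
  unfolding le_tuple_def using map_le_trans by metis

lemma le_tuple_nth: "le_tuple gs hs \<Longrightarrow> k < length hs \<Longrightarrow> gs ! k \<subseteq>\<^sub>m hs ! k"
  by (simp add: le_tuple_def)

lemma union_tuple_HeapN: "fs \<in> HeapN n \<Longrightarrow> gs \<in> HeapN n \<Longrightarrow> union_tuple fs gs \<in> HeapN n"
  by (auto simp: HeapN_iff union_tuple_def Heap_map_add)

lemma union_tuple_nth:
  "k < length fs \<Longrightarrow> k < length gs \<Longrightarrow> union_tuple fs gs ! k = (fs ! k) ++ (gs ! k)"
  by (simp add: union_tuple_def)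

lemma Delta_eq: "Delta n X = {hs \<in> HeapN n. \<exists>f\<in>X. \<forall>k<n. f \<subseteq>\<^sub>m hs ! k}"
  unfolding Delta_def HeapN_def by auto

definition meet :: "heap list \<Rightarrow> heap" where
  "meet hs = (\<lambda>x. if \<forall>k<length hs. (hs ! k) x = (hs ! 0) x then (hs ! 0) x else None)"

lemma meet_le: "k < length hs \<Longrightarrow> meet hs \<subseteq>\<^sub>m hs ! k"
  unfolding meet_def map_le_def by (auto split: if_splits)

lemma le_meet: "0 < length hs \<Longrightarrow> (\<And>k. k < length hs \<Longrightarrow> f \<subseteq>\<^sub>m hs ! k) \<Longrightarrow> f \<subseteq>\<^sub>m meet hs"
  unfolding meet_def map_le_def by (auto simp: dom_def)

lemma meet_Heap: "hs \<in> HeapN n \<Longrightarrow> 0 < n \<Longrightarrow> meet hs \<in> Heap"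
  by (metis HeapN_iff Heap_map_le meet_le)

section \<open>Assertions free of assertion variables\<close>

definition up_closed :: "heap set \<Rightarrow> bool" where
  "up_closed X \<longleftrightarrow> X \<subseteq> Heap \<and> (\<forall>h\<in>X. \<forall>h'\<in>Heap. h \<subseteq>\<^sub>m h' \<longrightarrow> h' \<in> X)"

definition heap_star :: "heap set \<Rightarrow> heap set \<Rightarrow> heap set" where
  "heap_star X Y = {f ++ g | f g. f \<in> X \<and> g \<in> Y \<and> dom f \<inter> dom g = {}}"

text \<open>The clause for \<open>AVar\<close> is arbitrary: \<open>usem\<close> only serves assertions without assertion
  variables.\<close>

fun usem :: "('p \<Rightarrow> ('v \<Rightarrow> int) \<Rightarrow> heap set) \<Rightarrow> ('v \<Rightarrow> int) \<Rightarrow> ('p, 'v, 'a) assn \<Rightarrow> heap set" where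
  "usem prim \<eta> (Prim P) = {h\<in>Heap. \<exists>f\<in>prim P \<eta>. f \<subseteq>\<^sub>m h}"
| "usem prim \<eta> (AVar a) = {}"
| "usem prim \<eta> ATrue = Heap"
| "usem prim \<eta> AFalse = {}"
| "usem prim \<eta> (Conj p q) = usem prim \<eta> p \<inter> usem prim \<eta> q"
| "usem prim \<eta> (Disj p q) = usem prim \<eta> p \<union> usem prim \<eta> q"
| "usem prim \<eta> (Star p q) = heap_star (usem prim \<eta> p) (usem prim \<eta> q)"
| "usem prim \<eta> (Ex x p) = (\<Union>v. usem prim (\<eta>(x := v)) p)"
| "usem prim \<eta> (All x p) = Heap \<inter> (\<Inter>v. usem prim (\<eta>(x := v)) p)"

lemma up_closed_heap_star:
  assumes X: "up_closed X" and Y: "up_closed Y"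
  shows "up_closed (heap_star X Y)"
  unfolding up_closed_def
proof (intro conjI ballI impI)
  show "heap_star X Y \<subseteq> Heap"
    using X Y Heap_map_add unfolding up_closed_def heap_star_def by blast
next
  fix h h' assume "h \<in> heap_star X Y" and h': "h' \<in> Heap" "h \<subseteq>\<^sub>m h'"
  then obtain f g where fg: "h = f ++ g" "f \<in> X" "g \<in> Y" "dom f \<inter> dom g = {}"
    unfolding heap_star_def by blast
  have fh': "f \<subseteq>\<^sub>m h'"
    using map_le_map_add_disjoint[OF fg(4)] fg(1) h'(2) map_le_trans by blast
  have "g \<subseteq>\<^sub>m h'" using fg h'(2) map_le_map_add map_le_trans by blast
  with fg(4) have "g \<subseteq>\<^sub>m h' |` (- dom f)"
    by (auto simp: map_le_def restrict_map_def)
  then have "h' |` (- dom f) \<in> Y"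
    using Y Heap_restrict_map[OF h'(1)] fg(3) unfolding up_closed_def by blast
  moreover have "dom f \<inter> dom (h' |` (- dom f)) = {}" by auto
  ultimately show "h' \<in> heap_star X Y"
    unfolding heap_star_def using map_le_split_restrict[OF fh'] fg(2) by blast
qed

lemma up_closed_usem: "up_closed (usem prim \<eta> \<phi>)"
proof (induction \<phi> arbitrary: \<eta>)
  case (Prim P) then show ?case unfolding up_closed_def using map_le_trans by fastforce
next
  case (Star p q) then show ?case using up_closed_heap_star by simp
next
  case (Ex x p) then show ?case unfolding up_closed_def by simp blast
next
  case (All x p) then show ?case unfolding up_closed_def by simp blast
qed (auto simp: up_closed_def)

lemma usem_Heap: "h \<in> usem prim \<eta> \<phi> \<Longrightarrow> h \<in> Heap"
  using up_closed_usem unfolding up_closed_def by blast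

lemma usem_mono: "h \<in> usem prim \<eta> \<phi> \<Longrightarrow> h \<subseteq>\<^sub>m h' \<Longrightarrow> h' \<in> Heap \<Longrightarrow> h' \<in> usem prim \<eta> \<phi>"
  using up_closed_usem unfolding up_closed_def by blast

lemma Delta_up_closed_iff:
  assumes n: "0 < n" and X: "up_closed X"
  shows "hs \<in> Delta n X \<longleftrightarrow> hs \<in> HeapN n \<and> meet hs \<in> X"
proof
  assume "hs \<in> Delta n X"
  then obtain f where hs: "hs \<in> HeapN n" and f: "f \<in> X" "\<forall>k<n. f \<subseteq>\<^sub>m hs ! k"
    unfolding Delta_eq by blast
  have "length hs = n" using hs by (simp add: HeapN_iff)
  then have "f \<subseteq>\<^sub>m meet hs" using n f(2) by (intro le_meet) auto
  then show "hs \<in> HeapN n \<and> meet hs \<in> X"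
    using X f(1) hs meet_Heap[OF hs n] unfolding up_closed_def by blast
next
  assume "hs \<in> HeapN n \<and> meet hs \<in> X"
  then show "hs \<in> Delta n X" unfolding Delta_eq by (auto simp: HeapN_iff intro: meet_le)
qed

lemma sep_star_Delta_subset:
  assumes "0 < n"
  shows "sep_star (Delta n X) (Delta n Y) \<subseteq> Delta n (heap_star X Y)"
proof
  fix hs assume "hs \<in> sep_star (Delta n X) (Delta n Y)"
  then obtain fs gs where hs: "hs = union_tuple fs gs" "fs \<in> Delta n X" "gs \<in> Delta n Y"
    "disj_tuple fs gs" unfolding sep_star_def by blast
  then obtain x y where x: "x \<in> X" "\<forall>k<n. x \<subseteq>\<^sub>m fs ! k" and y: "y \<in> Y" "\<forall>k<n. y \<subseteq>\<^sub>m gs ! k"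
    and N: "fs \<in> HeapN n" "gs \<in> HeapN n"
    unfolding Delta_eq by blast
  have len: "length fs = n" "length gs = n" using N by (auto simp: HeapN_iff)
  have dj: "\<And>k. k < n \<Longrightarrow> dom (fs ! k) \<inter> dom (gs ! k) = {}"
    using hs(4) len unfolding disj_tuple_def by auto
  have "dom x \<subseteq> dom (fs ! 0)" "dom y \<subseteq> dom (gs ! 0)"
    using x(2) y(2) assms map_le_implies_dom_le by blast+
  then have "dom x \<inter> dom y = {}" using dj[OF assms] by blast
  moreover have "x ++ y \<subseteq>\<^sub>m hs ! k" if k: "k < n" for k
  proof -
    have "x ++ y \<subseteq>\<^sub>m (fs ! k) ++ (gs ! k)"
      using x(2) y(2) dj k by (simp add: map_le_map_add_mono)
    then show ?thesis using k len by (simp add: hs(1) union_tuple_nth)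
  qed
  moreover have "hs \<in> HeapN n" using union_tuple_HeapN[OF N] hs(1) by simp
  ultimately show "hs \<in> Delta n (heap_star X Y)"
    unfolding Delta_eq heap_star_def using x(1) y(1) by blast
qed

lemma Delta_heap_star_subset: "Delta n (heap_star X Y) \<subseteq> sep_star (Delta n X) (Delta n Y)"
proof
  fix hs assume "hs \<in> Delta n (heap_star X Y)"
  then obtain x y where hs: "hs \<in> HeapN n" and xy: "x \<in> X" "y \<in> Y" "dom x \<inter> dom y = {}"
    and le: "\<forall>k<n. x ++ y \<subseteq>\<^sub>m hs ! k"
    unfolding Delta_eq heap_star_def by blast
  have len: "length hs = n" using hs by (simp add: HeapN_iff)
  define fs where "fs = map (\<lambda>h. h |` dom x) hs"
  define gs where "gs = map (\<lambda>h. h |` (- dom x)) hs"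
  have N: "fs \<in> HeapN n" "gs \<in> HeapN n"
    using hs unfolding fs_def gs_def HeapN_iff by (auto intro: Heap_restrict_map)
  have "x \<subseteq>\<^sub>m fs ! k" "y \<subseteq>\<^sub>m gs ! k" if k: "k < n" for k
  proof -
    have "x \<subseteq>\<^sub>m hs ! k" "y \<subseteq>\<^sub>m hs ! k"
      using le k map_le_map_add_disjoint[OF xy(3)] map_le_map_add map_le_trans by blast+
    then show "x \<subseteq>\<^sub>m fs ! k" "y \<subseteq>\<^sub>m gs ! k"
      using k len xy(3) unfolding fs_def gs_def map_le_def by (auto simp: restrict_map_def)
  qed
  then have "fs \<in> Delta n X" "gs \<in> Delta n Y"
    using N xy(1,2) unfolding Delta_eq by blast+
  moreover have "union_tuple fs gs = hs"
    unfolding union_tuple_def fs_def gs_def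
    by (rule nth_equalityI) (simp_all add: map_add_restrict_compl)
  moreover have "disj_tuple fs gs" unfolding disj_tuple_def fs_def gs_def by auto
  ultimately show "hs \<in> sep_star (Delta n X) (Delta n Y)" unfolding sep_star_def by blast
qed

lemma Delta_heap_star:
  "0 < n \<Longrightarrow> sep_star (Delta n X) (Delta n Y) = Delta n (heap_star X Y)"
  by (intro equalityI sep_star_Delta_subset Delta_heap_star_subset)

lemma sem_eq_Delta_usem:
  assumes "avars \<phi> = {}" "0 < n"
  shows "sem prim n \<eta> \<rho> \<phi> = Delta n (usem prim \<eta> \<phi>)"
  using assms
proof (induction \<phi> arbitrary: \<eta>)
  case (Prim P)
  show ?case unfolding sem.simps usem.simps
  proof (intro equalityI subsetI)
    fix hs assume "hs \<in> Delta n (prim P \<eta>)"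
    then obtain f where hs: "hs \<in> HeapN n" and f: "f \<in> prim P \<eta>" "\<forall>k<n. f \<subseteq>\<^sub>m hs ! k"
      unfolding Delta_eq by blast
    have "f \<in> Heap" using Heap_map_le f(2) hs Prim.prems(2) by (auto simp: HeapN_iff)
    then show "hs \<in> Delta n {h \<in> Heap. \<exists>f\<in>prim P \<eta>. f \<subseteq>\<^sub>m h}"
      using hs f map_le_refl[of f] unfolding Delta_eq by blast
  next
    fix hs assume "hs \<in> Delta n {h \<in> Heap. \<exists>f\<in>prim P \<eta>. f \<subseteq>\<^sub>m h}"
    then obtain g f where hs: "hs \<in> HeapN n" and "f \<in> prim P \<eta>" "f \<subseteq>\<^sub>m g" "\<forall>k<n. g \<subseteq>\<^sub>m hs ! k"
      unfolding Delta_eq by blast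
    then show "hs \<in> Delta n (prim P \<eta>)" unfolding Delta_eq using map_le_trans by blast
  qed
next
  case ATrue
  have "Map.empty \<in> Heap" by (simp add: Heap_def)
  then show ?case unfolding Delta_eq by (auto intro: map_le_empty)
next
  case (Conj p q)
  note iff = Delta_up_closed_iff[OF Conj.prems(2) up_closed_usem, of _ prim]
  show ?case using Conj iff[of _ \<eta> p] iff[of _ \<eta> q] iff[of _ \<eta> "Conj p q"] by auto
next
  case (Star p q)
  then show ?case by (simp add: Delta_heap_star)
next
  case (All x p)
  note iff = Delta_up_closed_iff[OF All.prems(2) up_closed_usem, of _ prim]
  show ?case using All iff[of _ "\<eta>(x := _)" p] iff[of _ \<eta> "All x p"]
    by (auto intro: meet_Heap[OF _ All.prems(2)])
qed (auto simp: Delta_eq)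

lemma sem1_eq_usem:
  assumes "avars \<phi> = {}"
  shows "sem1 prim \<eta> \<phi> = usem prim \<eta> \<phi>"
  unfolding sem1_def sem_eq_Delta_usem[OF assms zero_less_one] Delta_eq
  by (auto simp: HeapN_iff intro: usem_Heap usem_mono map_le_refl)

section \<open>Separating conjunction with assertion variables as colourings\<close>

text \<open>A colouring \<open>col c x\<close> assigns location \<open>x\<close> of the \<open>c\<close>-th heap of a tuple to a factor
  of an iterated separating conjunction; factor 0 is the first one.\<close>

definition piece :: "heap list \<Rightarrow> (nat \<Rightarrow> int \<Rightarrow> nat) \<Rightarrow> nat \<Rightarrow> heap list" where
  "piece hs col i = map (\<lambda>c. (hs ! c) |` {x. col c x = i}) [0..<length hs]"

definition coloured_star :: "nat \<Rightarrow> heap list set \<Rightarrow> heap list set list \<Rightarrow> heap list set" where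
  "coloured_star n P Qs = {hs \<in> HeapN n. \<exists>col.
     (\<forall>c<n. \<forall>x\<in>dom (hs ! c). col c x \<le> length Qs) \<and>
     piece hs col 0 \<in> P \<and> (\<forall>m<length Qs. piece hs col (Suc m) \<in> Qs ! m)}"

lemma length_piece [simp]: "length (piece hs col i) = length hs"
  by (simp add: piece_def)

lemma nth_piece [simp]: "c < length hs \<Longrightarrow> piece hs col i ! c = (hs ! c) |` {x. col c x = i}"
  by (simp add: piece_def)

lemma piece_HeapN: "hs \<in> HeapN n \<Longrightarrow> piece hs col i \<in> HeapN n"
  by (auto simp: HeapN_iff Heap_restrict_map)

lemma heap_list_eqI:
  "length hs = length gs \<Longrightarrow> (\<And>c x. c < length gs \<Longrightarrow> (hs ! c) x = (gs ! c) x) \<Longrightarrow> hs = gs"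
  by (rule nth_equalityI) auto

lemma piece_cong:
  assumes "\<And>c x. c < length hs \<Longrightarrow> col c x = i \<longleftrightarrow> col' c x = i'"
  shows "piece hs col i = piece hs col' i'"
  using assms by (auto simp: piece_def restrict_map_def intro!: map_cong ext)

lemma piece_disjoint:
  "i \<noteq> i' \<Longrightarrow> c < length hs \<Longrightarrow> dom (piece hs col i ! c) \<inter> dom (piece hs col i' ! c) = {}"
  by (auto simp: restrict_map_def split: if_splits)

lemma coloured_star_Nil: "P \<subseteq> HeapN n \<Longrightarrow> coloured_star n P [] = P"
proof (intro equalityI subsetI)
  fix hs assume "hs \<in> coloured_star n P []"
  then obtain col where hs: "hs \<in> HeapN n" "\<forall>c<n. \<forall>x\<in>dom (hs ! c). col c x = 0"
    "piece hs col 0 \<in> P" unfolding coloured_star_def by auto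
  have "(piece hs col 0 ! c) x = (hs ! c) x" if "c < length hs" for c x
    using hs(1,2) that by (cases "x \<in> dom (hs ! c)") (auto simp: HeapN_iff restrict_map_def)
  then have "piece hs col 0 = hs" by (intro heap_list_eqI) simp_all
  then show "hs \<in> P" using hs(3) by simp
next
  fix hs assume "P \<subseteq> HeapN n" "hs \<in> P"
  moreover have "piece hs (\<lambda>_ _. 0) 0 = hs" by (rule heap_list_eqI) auto
  ultimately show "hs \<in> coloured_star n P []"
    unfolding coloured_star_def by (auto intro!: exI[of _ "\<lambda>_ _. 0"])
qed

lemma piece_union_tuple:
  assumes dj: "disj_tuple fs gs" and col: "\<forall>c<length fs. \<forall>x\<in>dom (fs ! c). col c x < K"
  shows "piece (union_tuple fs gs) (\<lambda>c x. if x \<in> dom (fs ! c) then col c x else K) i =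
    (if i = K then gs else piece fs col i)"
proof (rule heap_list_eqI)
  have len: "length gs = length fs" using dj by (simp add: disj_tuple_def)
  then show "length (piece (union_tuple fs gs) (\<lambda>c x. if x \<in> dom (fs ! c) then col c x else K) i) =
      length (if i = K then gs else piece fs col i)"
    by (simp add: union_tuple_def)
  fix c x assume "c < length (if i = K then gs else piece fs col i)"
  then have c: "c < length fs" using len by (simp split: if_splits)
  have len_union: "length (union_tuple fs gs) = length fs" using len by (simp add: union_tuple_def)
  have "x \<notin> dom (gs ! c)" if "x \<in> dom (fs ! c)"
    using dj c that unfolding disj_tuple_def by blast
  then show "(piece (union_tuple fs gs) (\<lambda>c x. if x \<in> dom (fs ! c) then col c x else K) i ! c) x =
      ((if i = K then gs else piece fs col i) ! c) x"
    using c len col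
    by (cases "x \<in> dom (fs ! c)")
      (auto simp: len_union union_tuple_nth restrict_map_def map_add_def domIff split: option.split)
qed

lemma sep_star_coloured_star_subset:
  assumes Q: "Q \<subseteq> HeapN n"
  shows "sep_star (coloured_star n P Qs) Q \<subseteq> coloured_star n P (Qs @ [Q])"
proof
  let ?m = "length Qs"
  fix hs assume "hs \<in> sep_star (coloured_star n P Qs) Q"
  then obtain fs gs where hs: "hs = union_tuple fs gs" "fs \<in> coloured_star n P Qs" "gs \<in> Q"
    "disj_tuple fs gs" unfolding sep_star_def by blast
  then obtain col where fs: "fs \<in> HeapN n" and col: "\<forall>c<n. \<forall>x\<in>dom (fs ! c). col c x \<le> ?m"
    "piece fs col 0 \<in> P" "\<forall>m<?m. piece fs col (Suc m) \<in> Qs ! m"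
    unfolding coloured_star_def by blast
  have gs: "gs \<in> HeapN n" using hs(3) Q by blast
  define col' where "col' c x = (if x \<in> dom (fs ! c) then col c x else Suc ?m)" for c x
  have "\<forall>c<length fs. \<forall>x\<in>dom (fs ! c). col c x < Suc ?m"
    using col(1) fs by (auto simp: HeapN_iff less_Suc_eq_le)
  then have pieces: "piece hs col' i = (if i = Suc ?m then gs else piece fs col i)" for i
    unfolding hs(1) col'_def by (rule piece_union_tuple[OF hs(4)])
  have "\<forall>c<n. \<forall>x\<in>dom (hs ! c). col' c x \<le> Suc ?m"
    using col(1) by (fastforce simp: col'_def intro: le_SucI)
  moreover have "piece hs col' (Suc m) \<in> (Qs @ [Q]) ! m" if "m < Suc ?m" for m
    using that pieces col(3) hs(3) by (cases "m < ?m") (auto simp: nth_append)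
  moreover have "hs \<in> HeapN n" using union_tuple_HeapN[OF fs gs] hs(1) by simp
  moreover have "piece hs col' 0 \<in> P" using pieces[of 0] col(2) by simp
  ultimately show "hs \<in> coloured_star n P (Qs @ [Q])"
    unfolding coloured_star_def by auto
qed

lemma union_tuple_restrict_piece:
  assumes col: "\<forall>c<length hs. \<forall>x\<in>dom (hs ! c). col c x \<le> Suc m"
  shows "union_tuple (map (\<lambda>c. (hs ! c) |` {x. col c x \<le> m}) [0..<length hs])
    (piece hs col (Suc m)) = hs"
proof (rule heap_list_eqI)
  fix c x assume c: "c < length hs"
  show "(union_tuple (map (\<lambda>c. (hs ! c) |` {x. col c x \<le> m}) [0..<length hs])
      (piece hs col (Suc m)) ! c) x = (hs ! c) x"
  proof (cases "x \<in> dom (hs ! c)")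
    case True
    then have "col c x \<le> Suc m" using col c by blast
    then show ?thesis using c
      by (auto simp: union_tuple_nth restrict_map_def map_add_def split: option.split)
  next
    case False
    then show ?thesis using c
      by (auto simp: union_tuple_nth restrict_map_def map_add_def domIff split: option.split)
  qed
qed (simp add: union_tuple_def)

lemma coloured_star_snoc_subset:
  "coloured_star n P (Qs @ [Q]) \<subseteq> sep_star (coloured_star n P Qs) Q"
proof
  let ?m = "length Qs"
  fix hs assume "hs \<in> coloured_star n P (Qs @ [Q])"
  then obtain col where hs: "hs \<in> HeapN n" and col: "\<forall>c<n. \<forall>x\<in>dom (hs ! c). col c x \<le> Suc ?m"
    "piece hs col 0 \<in> P" "\<forall>m<Suc ?m. piece hs col (Suc m) \<in> (Qs @ [Q]) ! m"
    unfolding coloured_star_def by auto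
  have len: "length hs = n" using hs by (simp add: HeapN_iff)
  define fs where "fs = map (\<lambda>c. (hs ! c) |` {x. col c x \<le> ?m}) [0..<length hs]"
  define gs where "gs = piece hs col (Suc ?m)"
  have fs: "fs \<in> HeapN n" using hs unfolding fs_def by (auto simp: HeapN_iff Heap_restrict_map)
  have pieces: "piece fs col i = piece hs col i" if "i \<le> ?m" for i
    by (rule heap_list_eqI) (use that in \<open>auto simp: fs_def restrict_map_def\<close>)
  have "fs \<in> coloured_star n P Qs"
    unfolding coloured_star_def
  proof (intro CollectI conjI exI allI impI ballI)
    fix c x assume "c < n" "x \<in> dom (fs ! c)"
    then show "col c x \<le> ?m" using len by (auto simp: fs_def restrict_map_def split: if_splits)
  next
    fix m assume m: "m < ?m"
    then have "piece hs col (Suc m) \<in> (Qs @ [Q]) ! m" using col(3) by simp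
    then show "piece fs col (Suc m) \<in> Qs ! m" using m pieces[of "Suc m"] by (simp add: nth_append)
  qed (use fs col(2) pieces[of 0] in auto)
  moreover have "gs \<in> Q" using col(3) by (auto simp: gs_def)
  moreover have "disj_tuple fs gs" unfolding disj_tuple_def
    by (auto simp: fs_def gs_def restrict_map_def split: if_splits)
  moreover have "union_tuple fs gs = hs"
    unfolding fs_def gs_def using col(1) len by (intro union_tuple_restrict_piece) simp
  ultimately show "hs \<in> sep_star (coloured_star n P Qs) Q" unfolding sep_star_def by blast
qed

lemma coloured_star_snoc:
  "Q \<subseteq> HeapN n \<Longrightarrow> sep_star (coloured_star n P Qs) Q = coloured_star n P (Qs @ [Q])"
  by (intro equalityI sep_star_coloured_star_subset coloured_star_snoc_subset)

lemma sem_HeapN: "(\<And>a. \<rho> a \<subseteq> HeapN n) \<Longrightarrow> sem prim n \<eta> \<rho> \<phi> \<subseteq> HeapN n"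
proof (induction \<phi> arbitrary: \<eta>)
  case (Star p q)
  then show ?case unfolding sem.simps sep_star_def using union_tuple_HeapN by blast
next
  case (Ex x p)
  then show ?case by auto
next
  case (All x p)
  then show ?case by auto
qed (auto simp: Delta_eq)

lemma sem_star_vars:
  assumes "\<And>a. \<rho> a \<subseteq> HeapN n"
  shows "sem prim n \<eta> \<rho> (star_vars \<phi> as) = coloured_star n (sem prim n \<eta> \<rho> \<phi>) (map \<rho> as)"
proof (induction as rule: rev_induct)
  case Nil
  then show ?case by (simp add: star_vars_def coloured_star_Nil sem_HeapN assms)
next
  case (snoc a as)
  then show ?case by (simp add: star_vars_def coloured_star_snoc assms)
qed

lemma coloured_star_mono: "P \<subseteq> P' \<Longrightarrow> coloured_star n P Qs \<subseteq> coloured_star n P' Qs"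
  unfolding coloured_star_def by blast

lemma coloured_star_Delta_witness:
  assumes "hs \<in> coloured_star n (Delta n X) Qs"
  obtains f where "f \<in> X" "hs \<in> coloured_star n (Delta n {f}) Qs"
  using assms unfolding coloured_star_def Delta_eq by blast

lemma coloured_star_Delta_singleton_le:
  assumes "hs \<in> coloured_star n (Delta n {f}) Qs" "k < n"
  shows "f \<subseteq>\<^sub>m hs ! k"
proof -
  obtain col where "hs \<in> HeapN n" "\<forall>k<n. f \<subseteq>\<^sub>m piece hs col 0 ! k"
    using assms(1) unfolding coloured_star_def Delta_eq by blast
  then show ?thesis
    using assms(2) restrict_map_le map_le_trans by (fastforce simp: HeapN_iff)
qed

text \<open>Factors not selected by \<open>\<sigma>\<close> are merged into factor 0, which is allowed since \<open>P\<close> is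
  upward closed.\<close>

lemma coloured_star_select:
  assumes hs: "hs \<in> coloured_star n P Qs" and P: "P \<in> IRel n"
    and \<sigma>: "inj_on \<sigma> {..<m}" "\<forall>k<m. \<sigma> k < length Qs"
  shows "hs \<in> coloured_star n P (map (\<lambda>k. Qs ! \<sigma> k) [0..<m])"
proof -
  obtain col where N: "hs \<in> HeapN n" and col: "piece hs col 0 \<in> P"
    "\<forall>k<length Qs. piece hs col (Suc k) \<in> Qs ! k"
    using hs unfolding coloured_star_def by blast
  have len: "length hs = n" using N by (simp add: HeapN_iff)
  define col' where "col' c x =
    (if col c x \<in> Suc ` \<sigma> ` {..<m} then Suc (inv_into {..<m} \<sigma> (col c x - 1)) else 0)" for c x
  have recolour: "col' c x = Suc k \<longleftrightarrow> col c x = Suc (\<sigma> k)" if "k < m" for c x k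
    using that \<sigma>(1) by (auto simp: col'_def inj_on_def)
  have "le_tuple (piece hs col 0) (piece hs col' 0)"
    using len by (auto simp: le_tuple_def col'_def intro: restrict_map_mono)
  then have "piece hs col' 0 \<in> P"
    using P col(1) piece_HeapN[OF N] unfolding IRel_def by blast
  moreover have "piece hs col' (Suc k) \<in> Qs ! \<sigma> k" if "k < m" for k
    using piece_cong[of hs col' "Suc k" col "Suc (\<sigma> k)"] recolour[OF that] col(2) \<sigma>(2) that
    by auto
  moreover have "col' c x \<le> m" for c x
    using inv_into_into[of _ \<sigma> "{..<m}"] by (auto simp: col'_def Suc_le_eq)
  ultimately show ?thesis
    using N unfolding coloured_star_def by auto
qed

lemma count_mset_length_filter: "count (mset xs) c = length (filter (\<lambda>x. x = c) xs)"
  by (induction xs) auto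

lemma count_mset_eq_card: "count (mset xs) c = card {m. m < length xs \<and> xs ! m = c}"
  by (simp add: count_mset_length_filter length_filter_conv_card)

lemma subseteq_mset_iff_index_inj:
  "mset bs \<subseteq># mset as \<longleftrightarrow>
   (\<exists>\<sigma>. inj_on \<sigma> {..<length bs} \<and> (\<forall>m<length bs. \<sigma> m < length as \<and> as ! \<sigma> m = bs ! m))"
  (is "_ \<longleftrightarrow> (\<exists>\<sigma>. ?index \<sigma>)")
proof
  define occ where "occ xs c = {m. m < length xs \<and> xs ! m = c}" for xs :: "'a list" and c
  assume "mset bs \<subseteq># mset as"
  then have "card (occ bs c) \<le> card (occ as c)" for c
    by (metis count_mset_eq_card mset_subset_eq_count occ_def)
  then have "\<exists>g. g ` occ bs c \<subseteq> occ as c \<and> inj_on g (occ bs c)" for c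
    by (intro card_le_inj) (auto simp: occ_def)
  then obtain g where g: "\<And>c. g c ` occ bs c \<subseteq> occ as c \<and> inj_on (g c) (occ bs c)" by metis
  have mem: "g (bs ! m) m \<in> occ as (bs ! m)" if "m < length bs" for m
    using g[of "bs ! m"] that by (auto simp: occ_def)
  have "inj_on (\<lambda>m. g (bs ! m) m) {..<length bs}"
  proof (rule inj_onI)
    fix m m' assume m: "m \<in> {..<length bs}" "m' \<in> {..<length bs}" "g (bs ! m) m = g (bs ! m') m'"
    then have "bs ! m = bs ! m'" using mem[of m] mem[of m'] by (auto simp: occ_def)
    then show "m = m'" using g[of "bs ! m"] m unfolding inj_on_def occ_def by auto
  qed
  then show "\<exists>\<sigma>. ?index \<sigma>" using mem by (auto simp: occ_def)
next
  assume "\<exists>\<sigma>. ?index \<sigma>"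
  then obtain \<sigma> where \<sigma>: "?index \<sigma>" ..
  show "mset bs \<subseteq># mset as"
  proof (rule mset_subset_eqI)
    fix c
    have "card {m. m < length bs \<and> bs ! m = c} \<le> card {k. k < length as \<and> as ! k = c}"
      by (rule card_inj_on_le[of \<sigma>]) (use \<sigma> in \<open>auto intro: inj_on_subset\<close>)
    then show "count (mset bs) c \<le> count (mset as) c" by (simp add: count_mset_eq_card)
  qed
qed

lemma coloured_star_subseteq_mset:
  assumes "hs \<in> coloured_star n P (map \<rho> as)" "P \<in> IRel n" "mset bs \<subseteq># mset as"
  shows "hs \<in> coloured_star n P (map \<rho> bs)"
proof -
  obtain \<sigma> where \<sigma>: "inj_on \<sigma> {..<length bs}" "\<forall>m<length bs. \<sigma> m < length as \<and> as ! \<sigma> m = bs ! m"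
    using assms(3) subseteq_mset_iff_index_inj by blast
  have "map (\<lambda>m. map \<rho> as ! \<sigma> m) [0..<length bs] = map \<rho> bs"
    using \<sigma>(2) by (intro nth_equalityI) auto
  then show ?thesis
    using coloured_star_select[OF assms(1,2) \<sigma>(1)] \<sigma>(2) by simp
qed

lemma Pi_ge_Omega_iff_subseteq_mset:
  assumes "set (snd (R ! j)) \<subseteq> Vset L"
  shows "Pi_ge_Omega L R i j \<longleftrightarrow> mset (snd (R ! j)) \<subseteq># mset (snd (L ! i))"
proof -
  have "count (mset (snd (R ! j))) c = 0" if "c \<notin> Vset L" for c
    using assms that by (auto simp: count_mset_0_iff)
  then have "(\<forall>c\<in>Vset L. count (mset (snd (R ! j))) c \<le> count (mset (snd (L ! i))) c) \<longleftrightarrow>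
      (\<forall>c. count (mset (snd (R ! j))) c \<le> count (mset (snd (L ! i))) c)"
    by (metis le0)
  then show ?thesis
    unfolding Pi_ge_Omega_def Pi_def Omega_def subseteq_mset_def count_mset_length_filter .
qed

lemma canonicalD:
  assumes "canonical L R"
  shows "L \<noteq> []" "\<And>i. i < length L \<Longrightarrow> avars (fst (L ! i)) = {}"
    "\<And>j. j < length R \<Longrightarrow> avars (fst (R ! j)) = {}"
    "\<And>j. j < length R \<Longrightarrow> set (snd (R ! j)) \<subseteq> Vset L"
  using assms unfolding canonical_def Vset_def by (auto simp: case_prod_beta dest!: nth_mem)

lemma sem_big_conj: "ps \<noteq> [] \<Longrightarrow> sem prim n \<eta> \<rho> (big_conj ps) = (\<Inter>p\<in>set ps. sem prim n \<eta> \<rho> p)"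
  by (induction ps rule: big_conj.induct) auto

lemma sem_big_disj: "sem prim n \<eta> \<rho> (big_disj ps) = (\<Union>p\<in>set ps. sem prim n \<eta> \<rho> p)"
  by (induction ps rule: big_disj.induct) auto

lemma sem_canon_lhs_iff:
  "L \<noteq> [] \<Longrightarrow> hs \<in> sem prim n \<eta> \<rho> (canon_lhs L) \<longleftrightarrow>
     (\<forall>i<length L. hs \<in> sem prim n \<eta> \<rho> (star_vars (fst (L ! i)) (snd (L ! i))))"
  unfolding canon_lhs_def by (simp add: sem_big_conj all_set_conv_all_nth case_prod_beta)

lemma sem_canon_rhs_iff:
  "hs \<in> sem prim n \<eta> \<rho> (canon_rhs R) \<longleftrightarrow>
     (\<exists>j<length R. hs \<in> sem prim n \<eta> \<rho> (star_vars (fst (R ! j)) (snd (R ! j))))"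
  unfolding canon_rhs_def by (auto simp: sem_big_disj in_set_conv_nth case_prod_beta)
    (metis fst_conv snd_conv, metis nth_mem)

lemma Delta_subset_HeapN: "Delta n X \<subseteq> HeapN n"
  by (auto simp: Delta_eq)

lemma Delta_mono: "X \<subseteq> Y \<Longrightarrow> Delta n X \<subseteq> Delta n Y"
  unfolding Delta_def by blast

lemma Delta_IRel: "Delta n X \<in> IRel n"
  unfolding IRel_def
proof (intro CollectI conjI ballI impI)
  show "Delta n X \<subseteq> HeapN n" by (rule Delta_subset_HeapN)
next
  fix gs hs assume "gs \<in> Delta n X" and hs: "hs \<in> HeapN n" "le_tuple gs hs"
  then obtain f where "f \<in> X" "\<forall>k<n. f \<subseteq>\<^sub>m gs ! k" unfolding Delta_eq by blast
  moreover have "gs ! k \<subseteq>\<^sub>m hs ! k" if "k < n" for k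
    using hs that by (simp add: HeapN_iff le_tuple_nth)
  ultimately show "hs \<in> Delta n X" using hs(1) map_le_trans unfolding Delta_eq by blast
qed

lemma sem_star_vars_pure:
  assumes "avars \<phi> = {}" "0 < n" "\<And>a. \<rho> a \<subseteq> HeapN n"
  shows "sem prim n \<eta> \<rho> (star_vars \<phi> as) = coloured_star n (Delta n (usem prim \<eta> \<phi>)) (map \<rho> as)"
  using assms by (simp add: sem_star_vars sem_eq_Delta_usem)

lemma coloured_star_transfer:
  assumes "hs \<in> coloured_star n (Delta n {f}) (map \<rho> as)" "f \<in> X" "mset bs \<subseteq># mset as"
  shows "hs \<in> coloured_star n (Delta n X) (map \<rho> bs)"
proof -
  have "Delta n {f} \<subseteq> Delta n X" using assms(2) by (simp add: Delta_mono)
  then have "hs \<in> coloured_star n (Delta n X) (map \<rho> as)"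
    using assms(1) coloured_star_mono by blast
  then show ?thesis using coloured_star_subseteq_mset[OF _ Delta_IRel assms(3)] by blast
qed

lemma canon_lhs_witnesses:
  assumes can: "canonical L R" and n: "0 < n" and \<rho>: "\<And>a. \<rho> a \<subseteq> HeapN n"
    and hs: "hs \<in> sem prim n \<eta> \<rho> (canon_lhs L)"
  obtains F where "\<And>i. i < length L \<Longrightarrow> F i \<in> usem prim \<eta> (fst (L ! i))"
    "\<And>i. i < length L \<Longrightarrow> hs \<in> coloured_star n (Delta n {F i}) (map \<rho> (snd (L ! i)))"
proof -
  note can = canonicalD[OF can]
  have "\<exists>f. i < length L \<longrightarrow> f \<in> usem prim \<eta> (fst (L ! i)) \<and>
      hs \<in> coloured_star n (Delta n {f}) (map \<rho> (snd (L ! i)))" for i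
  proof (cases "i < length L")
    case True
    then have "hs \<in> sem prim n \<eta> \<rho> (star_vars (fst (L ! i)) (snd (L ! i)))"
      using hs sem_canon_lhs_iff[OF can(1)] by blast
    then have "hs \<in> coloured_star n (Delta n (usem prim \<eta> (fst (L ! i)))) (map \<rho> (snd (L ! i)))"
      by (simp add: sem_star_vars_pure[where \<rho>=\<rho>, OF can(2)[OF True] n \<rho>])
    then obtain f where "f \<in> usem prim \<eta> (fst (L ! i))"
      "hs \<in> coloured_star n (Delta n {f}) (map \<rho> (snd (L ! i)))"
      by (rule coloured_star_Delta_witness)
    then show ?thesis by blast
  qed simp
  then show thesis
    using that choice[of "\<lambda>i f. i < length L \<longrightarrow> f \<in> usem prim \<eta> (fst (L ! i)) \<and>
      hs \<in> coloured_star n (Delta n {f}) (map \<rho> (snd (L ! i)))"] by blast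
qed

section \<open>Soundness of the parametricity condition\<close>

lemma parametricity_condition_imp_valid_n:
  assumes can: "canonical L R" and pc: "parametricity_condition prim \<eta> L R" and n: "0 < n"
  shows "valid_n prim n \<eta> (canon_lhs L) (canon_rhs R)"
  unfolding valid_n_def
proof (intro allI impI subsetI)
  fix \<rho> hs
  assume \<rho>: "\<forall>a. \<rho> a \<in> IRel n" and hs: "hs \<in> sem prim n \<eta> \<rho> (canon_lhs L)"
  have \<rho>N: "\<And>a. \<rho> a \<subseteq> HeapN n" using \<rho> unfolding IRel_def by blast
  obtain F where F: "\<And>i. i < length L \<Longrightarrow> F i \<in> usem prim \<eta> (fst (L ! i))"
    "\<And>i. i < length L \<Longrightarrow> hs \<in> coloured_star n (Delta n {F i}) (map \<rho> (snd (L ! i)))"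
    using canon_lhs_witnesses[OF can n \<rho>N hs] by blast
  note can = canonicalD[OF can]
  have hsN: "hs \<in> HeapN n" using hs sem_HeapN[where \<rho>=\<rho>, OF \<rho>N] by blast
  define h where "h = meet hs"
  have h: "h \<in> Heap" unfolding h_def using meet_Heap[OF hsN n] .
  have "F i \<subseteq>\<^sub>m h" if "i < length L" for i
    unfolding h_def using hsN n coloured_star_Delta_singleton_le[OF F(2)[OF that]]
    by (intro le_meet) (auto simp: HeapN_iff)
  then have "(\<exists>i<length L. \<exists>j<length R.
        map F [0..<length L] ! i \<in> sem1 prim \<eta> (fst (R ! j)) \<and> Pi_ge_Omega L R i j) \<or>
      (\<exists>j<length R. snd (R ! j) = [] \<and> h \<in> sem1 prim \<eta> (fst (R ! j)))"
    using F(1) sem1_eq_usem[OF can(2)]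
    by (intro pc[unfolded parametricity_condition_def, rule_format, OF h]) (auto intro: usem_Heap)
  then obtain j where j: "j < length R"
    and "hs \<in> coloured_star n (Delta n (usem prim \<eta> (fst (R ! j)))) (map \<rho> (snd (R ! j)))"
  proof (elim disjE exE conjE)
    fix i j assume i: "i < length L" and j: "j < length R"
      and "map F [0..<length L] ! i \<in> sem1 prim \<eta> (fst (R ! j))" "Pi_ge_Omega L R i j"
    then show thesis
      using F(2)[OF i] sem1_eq_usem[OF can(3)[OF j]] Pi_ge_Omega_iff_subseteq_mset[OF can(4)[OF j]]
      by (intro that[OF j]) (simp add: coloured_star_transfer)
  next
    fix j assume j: "j < length R" and empty: "snd (R ! j) = []"
      and "h \<in> sem1 prim \<eta> (fst (R ! j))"
    then have "meet hs \<in> usem prim \<eta> (fst (R ! j))" using sem1_eq_usem[OF can(3)[OF j]] h_def by simp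
    then have "hs \<in> Delta n (usem prim \<eta> (fst (R ! j)))"
      using hsN by (simp add: Delta_up_closed_iff[OF n up_closed_usem])
    then show thesis
      using empty by (intro that[OF j]) (simp add: coloured_star_Nil[OF Delta_subset_HeapN])
  qed
  then show "hs \<in> sem prim n \<eta> \<rho> (canon_rhs R)"
    using sem_star_vars_pure[where \<rho>=\<rho>, OF can(3)[OF j] n \<rho>N] sem_canon_rhs_iff j by blast
qed

section \<open>Completeness: a countermodel from a violation\<close>

text \<open>Given heaps \<open>g i \<subseteq>\<^sub>m h\<close>, one per conjunct with variable list \<open>As ! i\<close>, we build a tuple of
  \<open>width\<close> heaps, each extending \<open>h\<close> by the same fresh token locations, the \<open>c\<close>-th heap storing
  \<open>c\<close> at every token. A slot \<open>(i, k)\<close> is the \<open>k\<close>-th variable occurrence of conjunct \<open>i\<close>.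
  Colouring \<open>i\<close> gives slot \<open>(i, k)\<close> the tokens of all pairs of slots containing it and, in the
  \<open>c\<close>-th heap, gives the part of \<open>h\<close> outside \<open>g i\<close> to slot \<open>(i, min c (length (As ! i) - 1))\<close>.
  Tokens are shared by any two slots of different conjuncts, so a disjunct can only be matched
  injectively inside one conjunct; as the leftover of \<open>h\<close> visits every slot of that conjunct
  in some heap, the pure part of the disjunct lies inside \<open>g i\<close>.\<close>

locale countermodel =
  fixes As :: "'a list list" and h :: heap and g :: "nat \<Rightarrow> heap"
  assumes h_Heap: "h \<in> Heap"
    and g_le: "\<And>i. i < length As \<Longrightarrow> g i \<subseteq>\<^sub>m h"
begin

text \<open>At least two heaps tell the tokens apart, and more heaps than variable occurrences in
  any conjunct let the leftover of \<open>h\<close> visit every slot.\<close>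

definition width :: nat where
  "width = 2 + (\<Sum>i<length As. length (As ! i))"

definition slot :: "nat \<times> nat \<Rightarrow> bool" where
  "slot s \<longleftrightarrow> fst s < length As \<and> snd s < length (As ! fst s)"

definition tokens :: "((nat \<times> nat) \<times> (nat \<times> nat)) set" where
  "tokens = {(s, s'). slot s \<and> slot s' \<and> (s = s' \<or> fst s \<noteq> fst s')}"

definition base :: int where
  "base = Max (insert 0 (dom h)) + 1"

definition loc :: "(nat \<times> nat) \<times> (nat \<times> nat) \<Rightarrow> int" where
  "loc t = base + int (to_nat t)"

definition token_of :: "int \<Rightarrow> (nat \<times> nat) \<times> (nat \<times> nat)" where
  "token_of x = from_nat (nat (x - base))"

definition component :: "nat \<Rightarrow> heap" where
  "component c x = (if x \<in> dom h then h x else if x \<in> loc ` tokens then Some (int c) else None)"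

definition tuple :: "heap list" where
  "tuple = map component [0..<width]"

definition colour :: "nat \<Rightarrow> nat \<Rightarrow> int \<Rightarrow> nat" where
  "colour i c x =
    (if x \<in> dom h then
       (if x \<in> dom (g i) \<or> As ! i = [] then 0 else Suc (min c (length (As ! i) - 1)))
     else if x \<in> loc ` tokens then
       (case token_of x of (s, s') \<Rightarrow>
          if fst s = i then Suc (snd s) else if fst s' = i then Suc (snd s') else 0)
     else 0)"

definition slot_piece :: "nat \<times> nat \<Rightarrow> heap list" where
  "slot_piece s = piece tuple (colour (fst s)) (Suc (snd s))"

definition assign :: "'a \<Rightarrow> heap list set" where
  "assign a = {gs \<in> HeapN width. \<exists>s. slot s \<and> As ! fst s ! snd s = a \<and> le_tuple (slot_piece s) gs}"

lemma slot_lt_width: "slot s \<Longrightarrow> snd s < width"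
  using member_le_sum[of "fst s" "{..<length As}" "\<lambda>i. length (As ! i)"]
  unfolding slot_def width_def by auto

lemma finite_tokens: "finite tokens"
proof -
  have "tokens \<subseteq> ({..<length As} \<times> {..<width}) \<times> ({..<length As} \<times> {..<width})"
    using slot_lt_width unfolding tokens_def by (auto simp: slot_def)
  then show ?thesis by (rule finite_subset) auto
qed

lemma loc_gt_dom_h: "x \<in> dom h \<Longrightarrow> x < loc t"
proof -
  assume "x \<in> dom h"
  then have "x \<le> Max (insert 0 (dom h))"
    using h_Heap by (intro Max_ge) (auto simp: Heap_def)
  then show ?thesis by (simp add: loc_def base_def)
qed

lemma loc_pos: "0 < loc t"
proof -
  have "0 \<le> Max (insert 0 (dom h))"
    using h_Heap by (intro Max_ge) (auto simp: Heap_def)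
  then show ?thesis by (simp add: loc_def base_def)
qed

lemma token_of_loc [simp]: "token_of (loc t) = t"
  by (simp add: token_of_def loc_def)

lemma dom_component: "dom (component c) = dom h \<union> loc ` tokens"
  by (auto simp: component_def split: if_splits)

lemma component_token: "t \<in> tokens \<Longrightarrow> component c (loc t) = Some (int c)"
  using loc_gt_dom_h[of "loc t" t] by (auto simp: component_def)

lemma component_dom_h: "x \<in> dom h \<Longrightarrow> component c x = h x"
  by (simp add: component_def)

lemma width_ge_2: "2 \<le> width"
  by (simp add: width_def)

lemma length_tuple [simp]: "length tuple = width"
  by (simp add: tuple_def)

lemma nth_tuple [simp]: "c < width \<Longrightarrow> tuple ! c = component c"
  by (simp add: tuple_def)

lemma tuple_HeapN: "tuple \<in> HeapN width"
proof -
  have "component c \<in> Heap" for c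
    using h_Heap finite_tokens loc_pos
    unfolding Heap_def mem_Collect_eq dom_component by auto
  then show ?thesis by (simp add: HeapN_iff)
qed

lemma assign_IRel: "assign a \<in> IRel width"
  unfolding IRel_def assign_def using le_tuple_trans by blast

lemma common_le_h:
  assumes "\<And>c. c < width \<Longrightarrow> f \<subseteq>\<^sub>m tuple ! c"
  shows "f \<subseteq>\<^sub>m h"
  unfolding map_le_def
proof
  fix x assume x: "x \<in> dom f"
  have f01: "f x = component 0 x" "f x = component 1 x"
    using assms[of 0] assms[of 1] width_ge_2 x by (auto simp: map_le_def)
  have "x \<notin> loc ` tokens" \<comment> \<open>tokens hold different values in the first two heaps\<close>
    using f01 component_token by auto
  then have "x \<in> dom h" using f01 x by (auto simp: component_def split: if_splits)
  then show "f x = h x" using f01 by (simp add: component_dom_h)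
qed

lemma tuple_in_conjunct:
  assumes i: "i < length As"
  shows "tuple \<in> coloured_star width (Delta width {g i}) (map assign (As ! i))"
  unfolding coloured_star_def
proof (intro CollectI conjI exI[of _ "colour i"] allI impI ballI)
  show "tuple \<in> HeapN width" by (rule tuple_HeapN)
next
  fix c x assume "c < width" "x \<in> dom (tuple ! c)"
  then consider "x \<in> dom h" | t where "t \<in> tokens" "x = loc t" "x \<notin> dom h"
    using loc_gt_dom_h by (auto simp: dom_component) blast
  then show "colour i c x \<le> length (map assign (As ! i))"
  proof cases
    case 1
    have "As ! i \<noteq> [] \<Longrightarrow> Suc (min c (length (As ! i) - 1)) \<le> length (As ! i)"
      by (cases "As ! i") auto
    with 1 show ?thesis by (simp add: colour_def)
  next
    case 2
    then show ?thesis by (auto simp: colour_def tokens_def slot_def split: if_splits)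
  qed
next
  have "g i \<subseteq>\<^sub>m piece tuple (colour i) 0 ! c" if "c < width" for c
    unfolding map_le_def
  proof
    fix x assume x: "x \<in> dom (g i)"
    then have "x \<in> dom h" "g i x = h x"
      using g_le[OF i] map_le_implies_dom_le by (blast, simp add: map_le_def)
    then show "g i x = (piece tuple (colour i) 0 ! c) x"
      using x that by (simp add: colour_def restrict_map_def component_dom_h)
  qed
  then show "piece tuple (colour i) 0 \<in> Delta width {g i}"
    using piece_HeapN[OF tuple_HeapN] by (simp add: Delta_eq)
next
  fix m assume m: "m < length (map assign (As ! i))"
  then have "slot (i, m)" using i by (simp add: slot_def)
  then have "piece tuple (colour i) (Suc m) \<in> assign (As ! i ! m)"
    unfolding assign_def slot_piece_def using piece_HeapN[OF tuple_HeapN] le_tuple_refl by fastforce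
  then show "piece tuple (colour i) (Suc m) \<in> map assign (As ! i) ! m" using m by simp
qed

lemma token_in_slot_piece:
  assumes t: "(s1, s2) \<in> tokens" and s: "s = s1 \<or> s = s2" and c: "c < width"
  shows "loc (s1, s2) \<in> dom (slot_piece s ! c)"
proof -
  have "loc (s1, s2) \<notin> dom h" using loc_gt_dom_h by blast
  moreover have "colour (fst s) c (loc (s1, s2)) = Suc (snd s)"
    using t s calculation by (auto simp: colour_def tokens_def)
  ultimately show ?thesis
    using t c component_token[OF t] by (simp add: slot_piece_def restrict_map_def domIff)
qed

lemma factor_slots:
  assumes "tuple \<in> coloured_star width P (map assign bs)"
  obtains cl S where "piece tuple cl 0 \<in> P"
    "\<And>m. m < length bs \<Longrightarrow> slot (S m) \<and> As ! fst (S m) ! snd (S m) = bs ! m \<and>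
       le_tuple (slot_piece (S m)) (piece tuple cl (Suc m))"
proof -
  obtain cl where cl: "piece tuple cl 0 \<in> P"
    "\<forall>m<length bs. piece tuple cl (Suc m) \<in> assign (bs ! m)"
    using assms unfolding coloured_star_def by auto
  then have "\<forall>m. \<exists>s. m < length bs \<longrightarrow> slot s \<and> As ! fst s ! snd s = bs ! m \<and>
      le_tuple (slot_piece s) (piece tuple cl (Suc m))"
    unfolding assign_def by blast
  then obtain S where "\<forall>m. m < length bs \<longrightarrow> slot (S m) \<and> As ! fst (S m) ! snd (S m) = bs ! m \<and>
      le_tuple (slot_piece (S m)) (piece tuple cl (Suc m))"
    by (rule choice[THEN exE])
  with cl(1) show thesis using that by blast
qed

lemma factor_slots_same_conjunct:
  assumes S: "\<And>m. m < N \<Longrightarrow> slot (S m) \<and> le_tuple (slot_piece (S m)) (piece tuple cl (Suc m))"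
    and m: "m < N" "m' < N" "m \<noteq> m'"
  shows "fst (S m) = fst (S m') \<and> S m \<noteq> S m'"
proof -
  have in_factor: "loc t \<in> dom (piece tuple cl (Suc l) ! 0)"
    if "l < N" "t \<in> tokens" "S l = fst t \<or> S l = snd t" for l t
  proof -
    have "slot_piece (S l) ! 0 \<subseteq>\<^sub>m piece tuple cl (Suc l) ! 0"
      using le_tuple_nth[of "slot_piece (S l)" "piece tuple cl (Suc l)" 0] S[OF that(1)] width_ge_2
      by simp
    then show ?thesis
      using token_in_slot_piece[of "fst t" "snd t" "S l" 0] that(2,3) width_ge_2
        map_le_implies_dom_le by fastforce
  qed
  have disjoint: "loc t \<notin> dom (piece tuple cl (Suc m) ! 0) \<inter> dom (piece tuple cl (Suc m') ! 0)" for t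
    using piece_disjoint[of "Suc m" "Suc m'" 0 tuple cl] m(3) width_ge_2 by simp
  have slots: "slot (S m)" "slot (S m')" using S m(1,2) by blast+
  show ?thesis
  proof (rule ccontr)
    assume "\<not> ?thesis"
    then have t: "(S m, S m') \<in> tokens" using slots unfolding tokens_def by auto
    have "loc (S m, S m') \<in> dom (piece tuple cl (Suc m) ! 0)" using in_factor[OF m(1) t] by simp
    moreover have "loc (S m, S m') \<in> dom (piece tuple cl (Suc m') ! 0)" using in_factor[OF m(2) t] by simp
    ultimately show False using disjoint by blast
  qed
qed

lemma leftover_in_g:
  assumes k: "slot (i, k)" and le: "le_tuple (slot_piece (i, k)) (piece tuple cl (Suc m))"
    and f: "\<And>c. c < width \<Longrightarrow> f \<subseteq>\<^sub>m piece tuple cl 0 ! c"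
  shows "f \<subseteq>\<^sub>m g i"
  unfolding map_le_def
proof
  fix x assume x: "x \<in> dom f"
  have "f \<subseteq>\<^sub>m h" using f restrict_map_le map_le_trans by (intro common_le_h) fastforce
  then have xh: "x \<in> dom h" and fx: "f x = h x"
    using x map_le_implies_dom_le by (blast, simp add: map_le_def)
  have kw: "k < width" using slot_lt_width[OF k] by simp
  have "x \<in> dom (g i)"
  proof (rule ccontr)
    assume "x \<notin> dom (g i)"
    then have "colour i k x = Suc k" using xh k by (auto simp: colour_def slot_def)
    then have "x \<in> dom (slot_piece (i, k) ! k)"
      using xh kw by (simp add: slot_piece_def restrict_map_def component_dom_h domIff)
    then have "x \<in> dom (piece tuple cl (Suc m) ! k)"
      using le_tuple_nth[OF le] kw map_le_implies_dom_le by fastforce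
    moreover have "x \<in> dom (piece tuple cl 0 ! k)"
      using f[OF kw] x map_le_implies_dom_le by blast
    ultimately show False using piece_disjoint[of 0 "Suc m" k tuple cl] kw by auto
  qed
  then show "f x = g i x" using fx g_le[of i] k by (simp add: map_le_def slot_def)
qed

lemma disjunct_in_conjunct:
  assumes "tuple \<in> coloured_star width (Delta width X) (map assign bs)" "bs \<noteq> []"
  obtains i f where "i < length As" "mset bs \<subseteq># mset (As ! i)" "f \<in> X" "f \<subseteq>\<^sub>m g i"
proof -
  obtain cl S where cl: "piece tuple cl 0 \<in> Delta width X"
    and S: "\<And>m. m < length bs \<Longrightarrow> slot (S m) \<and> As ! fst (S m) ! snd (S m) = bs ! m \<and>
       le_tuple (slot_piece (S m)) (piece tuple cl (Suc m))"
    using factor_slots[OF assms(1)] by blast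
  define i where "i = fst (S 0)"
  have bs0: "0 < length bs" using assms(2) by simp
  have same: "fst (S m) = fst (S m') \<and> S m \<noteq> S m'" if "m < length bs" "m' < length bs" "m \<noteq> m'" for m m'
    using factor_slots_same_conjunct[of "length bs" S cl m m'] S that by blast
  then have Si: "fst (S m) = i" if "m < length bs" for m
    using that bs0 unfolding i_def by (cases "m = 0") auto
  have i: "i < length As" using S[OF bs0] by (simp add: slot_def i_def)
  have "inj_on (\<lambda>m. snd (S m)) {..<length bs}"
  proof (rule inj_onI)
    fix m m' assume "m \<in> {..<length bs}" "m' \<in> {..<length bs}" "snd (S m) = snd (S m')"
    then have "S m = S m'" using Si[of m] Si[of m'] by (simp add: prod_eq_iff)
    then show "m = m'" using same[of m m'] \<open>m \<in> {..<length bs}\<close> \<open>m' \<in> {..<length bs}\<close> by auto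
  qed
  moreover have "snd (S m) < length (As ! i) \<and> As ! i ! snd (S m) = bs ! m" if "m < length bs" for m
    using S[OF that] Si[OF that] by (auto simp: slot_def)
  ultimately have "mset bs \<subseteq># mset (As ! i)"
    using subseteq_mset_iff_index_inj by blast
  moreover obtain f where f: "f \<in> X" "\<And>c. c < width \<Longrightarrow> f \<subseteq>\<^sub>m piece tuple cl 0 ! c"
    using cl unfolding Delta_eq by blast
  moreover obtain k where "S 0 = (i, k)" using Si[OF bs0] by (metis prod.collapse)
  then have "f \<subseteq>\<^sub>m g i" using S[OF bs0] by (auto intro: leftover_in_g[OF _ _ f(2)])
  ultimately show thesis using that i by blast
qed

lemma tuple_in_canon_lhs:
  assumes As: "As = map snd L" and L: "L \<noteq> []"
    and pure: "\<And>i. i < length L \<Longrightarrow> avars (fst (L ! i)) = {}"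
    and g: "\<And>i. i < length L \<Longrightarrow> g i \<in> usem prim \<eta> (fst (L ! i))"
  shows "tuple \<in> sem prim width \<eta> assign (canon_lhs L)"
  unfolding sem_canon_lhs_iff[OF L]
proof (intro allI impI)
  fix i assume i: "i < length L"
  have \<rho>: "\<And>a. assign a \<subseteq> HeapN width" using assign_IRel unfolding IRel_def by blast
  have "Delta width {g i} \<subseteq> Delta width (usem prim \<eta> (fst (L ! i)))"
    using g[OF i] by (simp add: Delta_mono)
  moreover have "tuple \<in> coloured_star width (Delta width {g i}) (map assign (snd (L ! i)))"
    using tuple_in_conjunct[of i] i As by simp
  ultimately have "tuple \<in> coloured_star width (Delta width (usem prim \<eta> (fst (L ! i)))) (map assign (snd (L ! i)))"
    by (rule subsetD[OF coloured_star_mono])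
  moreover have "0 < width" using width_ge_2 by simp
  ultimately show "tuple \<in> sem prim width \<eta> assign (star_vars (fst (L ! i)) (snd (L ! i)))"
    by (simp add: sem_star_vars_pure[where \<rho>=assign, OF pure[OF i] _ \<rho>])
qed
end

lemma valid_n_imp_parametricity_condition:
  assumes can: "canonical L R" and val: "\<forall>n\<ge>1. valid_n prim n \<eta> (canon_lhs L) (canon_rhs R)"
  shows "parametricity_condition prim \<eta> L R"
  unfolding parametricity_condition_def
proof (intro allI impI)
  fix h hs
  assume h: "h \<in> Heap" and "length hs = length L"
    and hs: "\<forall>i<length L. hs ! i \<in> Heap \<and> hs ! i \<subseteq>\<^sub>m h \<and> hs ! i \<in> sem1 prim \<eta> (fst (L ! i))"
  note can = canonicalD[OF can]
  interpret cm: countermodel "map snd L" h "(!) hs"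
    using h hs by unfold_locales auto
  let ?n = cm.width
  have n: "0 < ?n" using cm.width_ge_2 by simp
  have \<rho>N: "\<And>a. cm.assign a \<subseteq> HeapN ?n" using cm.assign_IRel unfolding IRel_def by blast
  have "cm.tuple \<in> sem prim ?n \<eta> cm.assign (canon_lhs L)"
    using hs sem1_eq_usem[OF can(2)] by (intro cm.tuple_in_canon_lhs[OF refl can(1,2)]) auto
  moreover have "sem prim ?n \<eta> cm.assign (canon_lhs L) \<subseteq> sem prim ?n \<eta> cm.assign (canon_rhs R)"
    using val n by (simp add: valid_n_def cm.assign_IRel)
  ultimately have "cm.tuple \<in> sem prim ?n \<eta> cm.assign (canon_rhs R)" by blast
  then obtain j where j: "j < length R"
    and "cm.tuple \<in> sem prim ?n \<eta> cm.assign (star_vars (fst (R ! j)) (snd (R ! j)))"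
    unfolding sem_canon_rhs_iff by blast
  then have tuple_j:
    "cm.tuple \<in> coloured_star ?n (Delta ?n (usem prim \<eta> (fst (R ! j)))) (map cm.assign (snd (R ! j)))"
    by (simp add: sem_star_vars_pure[where \<rho>=cm.assign, OF can(3)[OF j] n \<rho>N])
  show "(\<exists>i<length L. \<exists>j<length R. hs ! i \<in> sem1 prim \<eta> (fst (R ! j)) \<and> Pi_ge_Omega L R i j) \<or>
      (\<exists>j<length R. snd (R ! j) = [] \<and> h \<in> sem1 prim \<eta> (fst (R ! j)))"
  proof (cases "snd (R ! j) = []")
    case True
    then have "cm.tuple \<in> Delta ?n (usem prim \<eta> (fst (R ! j)))"
      using tuple_j by (simp add: coloured_star_Nil[OF Delta_subset_HeapN])
    then obtain f where f: "f \<in> usem prim \<eta> (fst (R ! j))" "\<And>c. c < ?n \<Longrightarrow> f \<subseteq>\<^sub>m cm.tuple ! c"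
      unfolding Delta_eq by blast
    have "h \<in> usem prim \<eta> (fst (R ! j))" using usem_mono[OF f(1) cm.common_le_h[OF f(2)] h] .
    then show ?thesis using True j sem1_eq_usem[OF can(3)[OF j]] by auto
  next
    case False
    obtain i f where "i < length (map snd L)" "mset (snd (R ! j)) \<subseteq># mset (map snd L ! i)"
      and f: "f \<in> usem prim \<eta> (fst (R ! j))" "f \<subseteq>\<^sub>m hs ! i"
      by (rule cm.disjunct_in_conjunct[OF tuple_j False])
    then have i: "i < length L" and "Pi_ge_Omega L R i j"
      by (simp_all add: Pi_ge_Omega_iff_subseteq_mset[OF can(4)[OF j]])
    moreover have "hs ! i \<in> usem prim \<eta> (fst (R ! j))" using hs i by (intro usem_mono[OF f]) auto
    ultimately show ?thesis using i j sem1_eq_usem[OF can(3)[OF j]] by auto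
  qed
qed

theorem mainTheorem10:
  fixes prim :: "'p \<Rightarrow> ('v \<Rightarrow> int) \<Rightarrow> heap set"
    and \<eta> :: "'v \<Rightarrow> int"
    and L R :: "(('p, 'v, 'a) assn \<times> 'a list) list"
  assumes "canonical L R"
  shows "parametricity_condition prim \<eta> L R \<longleftrightarrow>
         (\<forall>n\<ge>1. valid_n prim n \<eta> (canon_lhs L) (canon_rhs R))"
  using parametricity_condition_imp_valid_n[OF assms] valid_n_imp_parametricity_condition[OF assms]
  by auto

end
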